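(* There is a constant $c$ depending only on $d$ and $\kappa$ such that for all $0\le\theta\le\pi$ and all $x=(x_1,\dots,x_{d+1}),y\in S^d$, $$\big|V_\kappa[\chi_{B(x,\theta)}](y)\big|\le c\prod_{j=1}^{d+1}\frac{\theta^{2\kappa_j}}{(|x_j|+\theta)^{2\kappa_j}}\ \chi_{c(\bar x,\theta)}(\bar y).$$
   Context: $S^d$ is the unit sphere in $\mathbb R^{d+1}$, $\kappa=(\kappa_1,\dots,\kappa_{d+1})$ with $\kappa_i\ge0$, and $V_\kappa f(x)=c_\kappa\int_{[-1,1]^{d+1}}f(x_1t_1,\dots,x_{d+1}t_{d+1})\prod_{i=1}^{d+1}(1+t_i)(1-t_i^2)^{\kappa_i-1}dt$ with $V_\kappa1=1$ (factors with $\kappa_i=0$ interpreted via the limit $\frac12[g(1)+g(-1)]$). $B(x,\theta)=\{y\in\mathbb R^{d+1}:\|y\|\le1,\langle x,y\rangle\ge\cos\theta\}$; $c(z,\theta)=\{y\in S^d:\langle z,y\rangle\ge\cos\theta\}$ is the spherical cap; $\bar z=(|z_1|,\dots,|z_{d+1}|)$; $\chi_E$ is the indicator of $E$. *)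

theory Defs
  imports "HOL-Probability.Probability"
begin

text \<open>One-dimensional weight measure on [-1,1] for parameter k:
  for k > 0 the probability measure c_k (1+t)(1-t^2)^(k-1) dt on (-1,1);
  for k = 0 the limit functional g \<mapsto> (1/2)(g(1)+g(-1)) applied to g(t) = h(t)(1+t),
  i.e. the measure with density (1+t)/2 on {-1,1}.\<close>
definition wnorm :: "real \<Rightarrow> real" where
  "wnorm k = (LINT s:{-1<..<1}|lborel. (1 + s) * (1 - s\<^sup>2) powr (k - 1))"

definition wmeas :: "real \<Rightarrow> real measure" where
  "wmeas k = (if k = 0
     then density (count_space UNIV) (\<lambda>t. ennreal ((1 + t) / 2 * indicator {-1, 1} t))
     else density lborel (\<lambda>t. ennreal (indicator {-1<..<1} t * (1 + t) * (1 - t\<^sup>2) powr (k - 1) / wnorm k)))"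

definition V_kappa :: "real ^ 'n::finite \<Rightarrow> (real ^ 'n \<Rightarrow> real) \<Rightarrow> real ^ 'n \<Rightarrow> real" where
  "V_kappa \<kappa> f x = (\<integral>t. f (\<chi> i. x $ i * t i) \<partial>(PiM UNIV (\<lambda>i. wmeas (\<kappa> $ i))))"

definition Bset :: "real ^ 'n::finite \<Rightarrow> real \<Rightarrow> (real ^ 'n) set" where
  "Bset x \<theta> = {y. norm y \<le> 1 \<and> inner x y \<ge> cos \<theta>}"

definition cap :: "real ^ 'n::finite \<Rightarrow> real \<Rightarrow> (real ^ 'n) set" where
  "cap z \<theta> = {y. norm y = 1 \<and> inner z y \<ge> cos \<theta>}"

definition absvec :: "real ^ 'n::finite \<Rightarrow> real ^ 'n" where
  "absvec z = (\<chi> i. \<bar>z $ i\<bar>)"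

text \<open>The factor theta^(2k) / (a + theta)^(2k), with the conventions
  theta^0 = 1 and, for a = 0, the value 1 (= theta^(2k)/theta^(2k), also its limit at theta=0).\<close>
definition ratio_factor :: "real \<Rightarrow> real \<Rightarrow> real \<Rightarrow> real" where
  "ratio_factor \<theta> a k = (if k = 0 \<or> a = 0 then 1 else \<theta> powr (2 * k) / (a + \<theta>) powr (2 * k))"

end

theory Submission
  imports Defs
begin

text \<open>
  For t in the box [-1,1]^(d+1) and every j one has
  <x, (y_i t_i)_i> + |x_j| |y_j| (1 - |t_j|) <= <x', y'> <= 1, where x', y' are the vectors of
  absolute values. Hence (y_i t_i)_i in B(x, \<theta>) forces y' into the cap c(x', \<theta>) and confines
  each t_j to the boundary layer |x_j| |y_j| (1 - |t_j|) <= 1 - cos \<theta>, so V_\<kappa>[\<chi>_B](y) is at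
  most the product of the one-dimensional weights of these layers. The weight
  (1 + s)(1 - s^2)^(k-1) gives a layer {1 - |s| <= \<delta>} mass O(\<delta>^k). If |x_j| > 2\<theta>, then
  |y_j| >= |x_j| - \<theta> >= |x_j|/2 and 1 - cos \<theta> <= \<theta>^2/2 give \<delta> = O(\<theta>^2/(|x_j| + \<theta>)^2);
  if |x_j| <= 2\<theta>, the factor \<theta>^(2k)/(|x_j| + \<theta>)^(2k) is bounded below and the total mass
  suffices.
\<close>

lemma space_wmeas [simp]: "space (wmeas k) = UNIV"
  by (simp add: wmeas_def)

lemma borel_measurable_wmeasI: "f \<in> borel_measurable borel \<Longrightarrow> f \<in> borel_measurable (wmeas k)"
  unfolding wmeas_def by auto

lemma sets_wmeasI: "A \<in> sets borel \<Longrightarrow> A \<in> sets (wmeas k)"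
  unfolding wmeas_def by auto

lemma nn_integral_powr_from_0:
  fixes k \<delta> :: real
  assumes "k > 0" "\<delta> \<ge> 0"
  shows "(\<integral>\<^sup>+u. ennreal (indicator {0<..\<delta>} u * u powr (k - 1)) \<partial>lborel) = ennreal (\<delta> powr k / k)"
proof -
  have "((\<lambda>u. u powr (k - 1)) has_integral (\<delta> powr k / k)) {0..\<delta>}"
    using has_integral_powr_from_0[of "k - 1" \<delta>] assms by simp
  then have "((\<lambda>u. u powr (k - 1)) has_integral (\<delta> powr k / k)) {0<..\<delta>}"
    by (subst (asm) has_integral_spike_set_eq[where T="{0<..\<delta>}"])
       (auto intro: negligible_subset[OF negligible_empty])
  then have "((\<lambda>u. if u \<in> {0<..\<delta>} then u powr (k - 1) else 0) has_integral (\<delta> powr k / k)) UNIV"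
    by (subst has_integral_restrict_UNIV)
  then have "((\<lambda>u. indicator {0<..\<delta>} u * u powr (k - 1)) has_integral (\<delta> powr k / k)) UNIV"
    by (rule has_integral_eq[rotated]) (simp add: indicator_def)
  then show ?thesis
    by (intro nn_integral_has_integral_lborel) auto
qed

lemma weight_le_boundary_powr:
  fixes k s :: real
  assumes "-1 < s" "s < 1"
  shows "(1 + s) * (1 - s\<^sup>2) powr (k - 1) \<le> 2 * 2 powr \<bar>k - 1\<bar> * (1 - \<bar>s\<bar>) powr (k - 1)"
proof -
  have factor: "1 - s\<^sup>2 = (1 + \<bar>s\<bar>) * (1 - \<bar>s\<bar>)"
    by (simp add: power2_eq_square algebra_simps)
  have bound: "(1 + \<bar>s\<bar>) powr (k - 1) \<le> 2 powr \<bar>k - 1\<bar>"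
  proof (cases "k - 1 \<ge> 0")
    case True
    then show ?thesis
      using assms by (simp add: powr_mono2)
  next
    case False
    then have "(1 + \<bar>s\<bar>) powr (k - 1) \<le> 1"
      using powr_mono[of "k - 1" 0 "1 + \<bar>s\<bar>"] by (simp split: if_splits; linarith)
    also have "1 \<le> 2 powr \<bar>k - 1\<bar>"
      by (rule ge_one_powr_ge_zero) auto
    finally show ?thesis .
  qed
  have "(1 + s) * (1 - s\<^sup>2) powr (k - 1) = (1 + s) * (1 + \<bar>s\<bar>) powr (k - 1) * (1 - \<bar>s\<bar>) powr (k - 1)"
    unfolding factor using assms by (simp add: powr_mult)
  also have "\<dots> \<le> 2 * 2 powr \<bar>k - 1\<bar> * (1 - \<bar>s\<bar>) powr (k - 1)"
    using assms bound by (intro mult_right_mono mult_mono) auto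
  finally show ?thesis .
qed

text \<open>For k > 0 the normalisation wnorm k is positive; using its absolute value spares proving that.\<close>

definition wmeas_const :: "real \<Rightarrow> real" where
  "wmeas_const k = (if k = 0 then 1 else 4 * 2 powr \<bar>k - 1\<bar> / (k * \<bar>wnorm k\<bar>))"

lemma wmeas_const_nonneg: "0 \<le> k \<Longrightarrow> 0 \<le> wmeas_const k"
  by (simp add: wmeas_const_def)

lemma emeasure_wmeas_boundary_layer:
  fixes k \<delta> :: real and A :: "real set"
  assumes k: "k > 0" and \<delta>: "0 \<le> \<delta>" and A: "A \<in> sets borel"
    and layer: "\<And>s. s \<in> A \<Longrightarrow> -1 < s \<Longrightarrow> s < 1 \<Longrightarrow> 1 - \<bar>s\<bar> \<le> \<delta>"
  shows "emeasure (wmeas k) A \<le> ennreal (wmeas_const k * \<delta> powr k)"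
proof -
  define Q where "Q = 2 * 2 powr \<bar>k - 1\<bar> / \<bar>wnorm k\<bar>"
  define H where "H u = indicator {0<..\<delta>} u * u powr (k - 1)" for u :: real
  have Q: "Q \<ge> 0" and H: "\<And>u. H u \<ge> 0"
    by (auto simp: Q_def H_def indicator_def)
  have [measurable]: "H \<in> borel_measurable borel"
    unfolding H_def by measurable
  \<comment> \<open>Within (-1,1) the layer 1 - |t| <= \<delta> is the union of the supports of H(1 - t) and H(1 + t).\<close>
  have density_le: "(1 + t) * (1 - t\<^sup>2) powr (k - 1) / wnorm k \<le> Q * (H (1 - t) + H (1 + t))"
    if t: "t \<in> A" "-1 < t" "t < 1" for t
  proof -
    have w: "(1 + t) * (1 - t\<^sup>2) powr (k - 1) \<ge> 0"
      using t by simp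
    have "(1 + t) * (1 - t\<^sup>2) powr (k - 1) / wnorm k \<le> (1 + t) * (1 - t\<^sup>2) powr (k - 1) / \<bar>wnorm k\<bar>"
      using w by (cases "wnorm k \<ge> 0") (auto intro: order_trans[OF divide_nonneg_nonpos])
    also have "\<dots> \<le> Q * (1 - \<bar>t\<bar>) powr (k - 1)"
      using divide_right_mono[OF weight_le_boundary_powr[OF t(2,3), of k], of "\<bar>wnorm k\<bar>"]
      by (simp add: Q_def)
    also have "(1 - \<bar>t\<bar>) powr (k - 1) \<le> H (1 - t) + H (1 + t)"
      using t layer[OF t] H[of "1 - t"] H[of "1 + t"] by (cases "t \<ge> 0") (auto simp: H_def)
    finally show ?thesis
      using Q by (simp add: mult_left_mono)
  qed
  have "emeasure (wmeas k) A
      = (\<integral>\<^sup>+ t. ennreal (indicator {-1<..<1} t * (1 + t) * (1 - t\<^sup>2) powr (k - 1) / wnorm k) * indicator A t \<partial>lborel)"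
    using k A by (simp add: wmeas_def emeasure_density)
  also have "\<dots> \<le> (\<integral>\<^sup>+ t. ennreal (Q * (H (1 - t) + H (1 + t))) \<partial>lborel)"
    using density_le by (intro nn_integral_mono) (auto simp: indicator_def intro: ennreal_leI)
  also have "\<dots> = ennreal Q * ((\<integral>\<^sup>+ t. ennreal (H (1 - t)) \<partial>lborel) + (\<integral>\<^sup>+ t. ennreal (H (1 + t)) \<partial>lborel))"
    using Q H by (simp add: ennreal_mult ennreal_plus nn_integral_cmult nn_integral_add)
  also have "(\<integral>\<^sup>+ t. ennreal (H (1 - t)) \<partial>lborel) = (\<integral>\<^sup>+ u. ennreal (H u) \<partial>lborel)"
    using nn_integral_real_affine[of "\<lambda>u. ennreal (H u)" "-1" 1] by simp
  also have "(\<integral>\<^sup>+ t. ennreal (H (1 + t)) \<partial>lborel) = (\<integral>\<^sup>+ u. ennreal (H u) \<partial>lborel)"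
    using nn_integral_real_affine[of "\<lambda>u. ennreal (H u)" 1 1] by simp
  also have "(\<integral>\<^sup>+ u. ennreal (H u) \<partial>lborel) = ennreal (\<delta> powr k / k)"
    unfolding H_def by (rule nn_integral_powr_from_0[OF k \<delta>])
  also have "ennreal Q * (ennreal (\<delta> powr k / k) + ennreal (\<delta> powr k / k)) = ennreal (wmeas_const k * \<delta> powr k)"
    using Q k \<delta> by (simp add: wmeas_const_def Q_def ennreal_mult''[symmetric] ennreal_plus[symmetric] ac_simps del: ennreal_plus)
  finally show ?thesis .
qed

lemma emeasure_wmeas_le_const:
  assumes "k \<ge> 0" "A \<in> sets borel"
  shows "emeasure (wmeas k) A \<le> ennreal (wmeas_const k)"
proof (cases "k = 0")
  case True
  have "emeasure (wmeas k) A
      = (\<integral>\<^sup>+ t. ennreal ((1 + t) / 2 * indicator {-1, 1} t) * indicator A t \<partial>count_space UNIV)"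
    using True by (simp add: wmeas_def emeasure_density)
  also have "\<dots> \<le> (\<integral>\<^sup>+ (t::real). ennreal (indicator {1} t) \<partial>count_space UNIV)"
    by (rule nn_integral_mono) (auto simp: indicator_def)
  also have "\<dots> = 1"
    by (simp add: ennreal_indicator)
  finally show ?thesis
    using True by (simp add: wmeas_const_def)
next
  case False
  then show ?thesis
    using emeasure_wmeas_boundary_layer[of k 1 A] assms by simp
qed

lemma finite_measure_wmeas: "k \<ge> 0 \<Longrightarrow> finite_measure (wmeas k)"
  using emeasure_wmeas_le_const[of k UNIV] by (intro finite_measureI) (auto simp: top_unique)

lemma emeasure_wmeas_abs_gt_1: "emeasure (wmeas k) {s. 1 < \<bar>s\<bar>} = 0"
  unfolding wmeas_def
  by (auto simp: emeasure_density nn_integral_0_iff_AE indicator_def intro!: AE_I2)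

lemma AE_PiM_wmeas_abs_le_1:
  assumes "\<And>i. \<kappa> i \<ge> 0"
  shows "AE t in PiM (UNIV :: 'n::finite set) (\<lambda>i. wmeas (\<kappa> i)). \<forall>i. \<bar>t i\<bar> \<le> 1"
proof -
  interpret product_sigma_finite "\<lambda>i. wmeas (\<kappa> i)"
    using finite_measure_wmeas assms by (simp add: product_sigma_finite_def finite_measure_def)
  have outside: "{s::real. 1 < \<bar>s\<bar>} \<in> sets borel"
    by measurable
  have "AE t in PiM UNIV (\<lambda>i. wmeas (\<kappa> i)). \<bar>t i\<bar> \<le> 1" for i
  proof (rule AE_I')
    define N where "N = (\<Pi>\<^sub>E j\<in>UNIV. if j = i then {s::real. 1 < \<bar>s\<bar>} else UNIV)"
    have N_sets: "N \<in> sets (PiM UNIV (\<lambda>i. wmeas (\<kappa> i)))"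
      unfolding N_def by (rule sets_PiM_I_finite) (simp_all add: outside sets_wmeasI)
    have "emeasure (PiM UNIV (\<lambda>i. wmeas (\<kappa> i))) N
        = (\<Prod>j\<in>UNIV. emeasure (wmeas (\<kappa> j)) (if j = i then {s. 1 < \<bar>s\<bar>} else UNIV))"
      unfolding N_def by (rule emeasure_PiM) (simp_all add: outside sets_wmeasI)
    also have "\<dots> = 0"
      using emeasure_wmeas_abs_gt_1[of "\<kappa> i"] by (intro prod_zero) (auto intro!: bexI[of _ i])
    finally show "N \<in> null_sets (PiM UNIV (\<lambda>i. wmeas (\<kappa> i)))"
      using N_sets by auto
    show "{t \<in> space (PiM UNIV (\<lambda>i. wmeas (\<kappa> i))). \<not> \<bar>t i\<bar> \<le> 1} \<subseteq> N"
      by (auto simp: N_def space_PiM PiE_def extensional_def)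
  qed
  then show ?thesis
    by (simp add: AE_all_countable)
qed

lemma one_minus_cos_le: "1 - cos t \<le> t\<^sup>2 / 2" for t :: real
proof -
  have "1 - cos t = 2 * (sin (t / 2))\<^sup>2"
    using cos_double_sin[of "t / 2"] by simp
  also have "\<dots> \<le> 2 * (t / 2)\<^sup>2"
    using abs_sin_x_le_abs_x[of "t / 2"] by (simp only: abs_le_square_iff)
  finally show ?thesis
    by (simp add: power2_eq_square)
qed

lemma power2_powr: "0 \<le> t \<Longrightarrow> (t\<^sup>2) powr k = t powr (2 * k)" for t k :: real
  by (simp add: powr_powr flip: powr_numeral)

lemma ratio_factor_nonneg: "0 \<le> ratio_factor \<theta> a k"
  by (simp add: ratio_factor_def)

lemma one_le_ratio_factor:
  fixes a \<theta> k :: real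
  assumes "0 \<le> k" "0 \<le> a" "k = 0 \<or> a \<le> 2 * \<theta>"
  shows "1 \<le> 9 powr k * ratio_factor \<theta> a k"
proof (cases "k = 0 \<or> a = 0")
  case True
  then show ?thesis
    using assms(1) by (auto simp: ratio_factor_def intro: ge_one_powr_ge_zero)
next
  case False
  then have k: "k > 0" and a: "0 < a" "a \<le> 2 * \<theta>"
    using assms by auto
  then have \<theta>: "\<theta> > 0"
    by simp
  have "(a + \<theta>) powr (2 * k) \<le> (3 * \<theta>) powr (2 * k)"
    using a k by (intro powr_mono2) auto
  also have "\<dots> = 9 powr k * \<theta> powr (2 * k)"
    using \<theta> by (simp add: powr_mult power2_powr[of 3, symmetric])
  finally show ?thesis
    using k a \<theta> by (simp add: ratio_factor_def pos_le_divide_eq)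
qed

lemma layer_width_powr_le_ratio_factor:
  fixes a b \<theta> k :: real
  assumes k: "k > 0" and a: "2 * \<theta> < a" and b: "a - b \<le> \<theta>" and \<theta>: "0 \<le> \<theta>"
  shows "((1 - cos \<theta>) / (a * b)) powr k \<le> 9 powr k * ratio_factor \<theta> a k"
proof -
  have ab: "a > 0" "b \<ge> a / 2"
    using a b \<theta> by auto
  have "(1 - cos \<theta>) / (a * b) \<le> (\<theta>\<^sup>2 / 2) / (a * (a / 2))"
    using ab by (intro frac_le one_minus_cos_le mult_left_mono) auto
  also have "\<dots> = 9 * \<theta>\<^sup>2 / (3 * a)\<^sup>2"
    using ab by (simp add: field_simps power2_eq_square)
  also have "\<dots> \<le> 9 * \<theta>\<^sup>2 / (a + \<theta>)\<^sup>2"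
    using a \<theta> by (intro divide_left_mono power_mono mult_pos_pos) auto
  finally have "(1 - cos \<theta>) / (a * b) \<le> 9 * \<theta>\<^sup>2 / (a + \<theta>)\<^sup>2" .
  moreover have "0 \<le> (1 - cos \<theta>) / (a * b)"
    using ab by simp
  ultimately have "((1 - cos \<theta>) / (a * b)) powr k \<le> (9 * \<theta>\<^sup>2 / (a + \<theta>)\<^sup>2) powr k"
    using k by (intro powr_mono2) auto
  also have "\<dots> = 9 powr k * ratio_factor \<theta> a k"
    using k \<theta> ab by (simp add: ratio_factor_def powr_mult powr_divide power2_powr)
  finally show ?thesis .
qed

lemma measure_wmeas_layer_le:
  fixes k a b \<theta> :: real
  assumes k: "k \<ge> 0" and \<theta>: "0 \<le> \<theta>" and a: "0 \<le> a" and ab: "a - b \<le> \<theta>"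
  shows "measure (wmeas k) {s. a * b * (1 - \<bar>s\<bar>) \<le> 1 - cos \<theta>}
    \<le> wmeas_const k * 9 powr k * ratio_factor \<theta> a k"
proof -
  define G where "G = {s::real. a * b * (1 - \<bar>s\<bar>) \<le> 1 - cos \<theta>}"
  define r where "r = 9 powr k * ratio_factor \<theta> a k"
  have G: "G \<in> sets borel"
    unfolding G_def by measurable
  have C: "wmeas_const k \<ge> 0"
    using k by (rule wmeas_const_nonneg)
  have "emeasure (wmeas k) G \<le> ennreal (wmeas_const k * r)"
  proof (cases "k = 0 \<or> a \<le> 2 * \<theta>")
    case True
    have "emeasure (wmeas k) G \<le> ennreal (wmeas_const k)"
      by (rule emeasure_wmeas_le_const[OF k G])
    also have "\<dots> \<le> ennreal (wmeas_const k * r)"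
      using C one_le_ratio_factor[OF k a True]
      by (intro ennreal_leI) (simp add: r_def mult_le_cancel_left1)
    finally show ?thesis .
  next
    case False
    then have k_pos: "k > 0" and a_large: "2 * \<theta> < a"
      using k by auto
    then have ab_pos: "a * b > 0"
      using ab \<theta> by simp
    define \<delta> where "\<delta> = (1 - cos \<theta>) / (a * b)"
    have "emeasure (wmeas k) G \<le> ennreal (wmeas_const k * \<delta> powr k)"
      using ab_pos by (intro emeasure_wmeas_boundary_layer[OF k_pos _ G])
        (auto simp: \<delta>_def G_def pos_le_divide_eq mult.commute)
    also have "\<dots> \<le> ennreal (wmeas_const k * r)"
      unfolding \<delta>_def r_def using C k_pos a_large ab \<theta>
      by (intro ennreal_leI mult_left_mono layer_width_powr_le_ratio_factor) auto
    finally show ?thesis .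
  qed
  moreover have "0 \<le> wmeas_const k * r"
    using C by (simp add: r_def ratio_factor_nonneg)
  ultimately show ?thesis
    by (simp add: G_def r_def measure_def enn2real_leI mult.assoc)
qed

lemma inner_absvec: "inner (absvec u) (absvec v) = (\<Sum>i\<in>UNIV. \<bar>u $ i\<bar> * \<bar>v $ i\<bar>)"
  by (simp add: inner_vec_def absvec_def)

lemma norm_absvec [simp]: "norm (absvec u) = norm u"
  unfolding norm_eq_sqrt_inner inner_absvec by (simp add: inner_vec_def abs_mult_self_eq)

lemma inner_scaled_le_inner_absvec:
  fixes x y :: "real ^ 'n::finite" and t :: "'n \<Rightarrow> real"
  assumes t: "\<forall>i. \<bar>t i\<bar> \<le> 1"
  shows "inner x (\<chi> i. y $ i * t i) + \<bar>x $ j\<bar> * \<bar>y $ j\<bar> * (1 - \<bar>t j\<bar>) \<le> inner (absvec x) (absvec y)"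
proof -
  have "x $ i * (y $ i * t i) + (if i = j then \<bar>x $ j\<bar> * \<bar>y $ j\<bar> * (1 - \<bar>t j\<bar>) else 0)
      \<le> \<bar>x $ i\<bar> * \<bar>y $ i\<bar>" for i
  proof -
    have "x $ i * (y $ i * t i) \<le> \<bar>x $ i\<bar> * \<bar>y $ i\<bar> * \<bar>t i\<bar>"
      by (metis abs_ge_self abs_mult mult.assoc)
    moreover have "\<bar>x $ i\<bar> * \<bar>y $ i\<bar> * \<bar>t i\<bar> \<le> \<bar>x $ i\<bar> * \<bar>y $ i\<bar>"
      using t by (simp add: mult_left_le)
    ultimately show ?thesis
      by (auto simp: right_diff_distrib)
  qed
  then have "(\<Sum>i\<in>UNIV. x $ i * (y $ i * t i) + (if i = j then \<bar>x $ j\<bar> * \<bar>y $ j\<bar> * (1 - \<bar>t j\<bar>) else 0))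
      \<le> (\<Sum>i\<in>UNIV. \<bar>x $ i\<bar> * \<bar>y $ i\<bar>)"
    by (rule sum_mono)
  then show ?thesis
    by (simp add: inner_vec_def absvec_def sum.distrib)
qed

lemma norm_absvec_diff_le:
  fixes x y :: "real ^ 'n::finite"
  assumes "norm x = 1" "norm y = 1" "0 \<le> \<theta>" "cos \<theta> \<le> inner (absvec x) (absvec y)"
  shows "norm (absvec x - absvec y) \<le> \<theta>"
proof -
  have "(norm (absvec x - absvec y))\<^sup>2 = 2 * (1 - inner (absvec x) (absvec y))"
    using dot_norm_neg[of "absvec x" "absvec y"] assms(1,2) by simp
  also have "\<dots> \<le> 2 * (1 - cos \<theta>)"
    using assms(4) by simp
  also have "\<dots> \<le> \<theta>\<^sup>2"
    using one_minus_cos_le[of \<theta>] by simp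
  finally show ?thesis
    using assms(3) by (rule power2_le_imp_le)
qed

lemma closed_Bset: "closed (Bset x \<theta>)"
  unfolding Bset_def by (intro closed_Collect_conj closed_Collect_le continuous_intros)

lemma borel_measurable_scaled_vec:
  "(\<lambda>t. \<chi> i. y $ i * t i) \<in> borel_measurable (PiM UNIV (\<lambda>i. wmeas (\<kappa> i)))"
  for y :: "real ^ 'n::finite"
proof (rule borel_measurable_euclidean_space[THEN iffD2], rule ballI)
  fix b :: "real ^ 'n"
  assume "b \<in> Basis"
  then obtain i where b: "b = axis i 1"
    by (auto simp: Basis_vec_def)
  have "(\<lambda>t. t i) \<in> borel_measurable (PiM UNIV (\<lambda>i. wmeas (\<kappa> i)))"
    by (rule measurable_compose[OF measurable_component_singleton[of i] borel_measurable_wmeasI[of "\<lambda>s. s"]])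
      simp_all
  then show "(\<lambda>t. (\<chi> i. y $ i * t i) \<bullet> b) \<in> borel_measurable (PiM UNIV (\<lambda>i. wmeas (\<kappa> i)))"
    by (simp add: b inner_axis)
qed

lemma V_kappa_indicator_nonneg: "0 \<le> V_kappa \<kappa> (indicator S) y"
  by (simp add: V_kappa_def)

lemma V_kappa_indicator_le_prod:
  fixes \<kappa> y :: "real ^ 'n::finite"
  assumes \<kappa>: "\<forall>i. \<kappa> $ i \<ge> 0" and S: "S \<in> sets borel" and G: "\<And>j. G j \<in> sets borel"
    and preimage: "\<And>t j. \<forall>i. \<bar>t i\<bar> \<le> 1 \<Longrightarrow> (\<chi> i. y $ i * t i) \<in> S \<Longrightarrow> t j \<in> G j"
  shows "V_kappa \<kappa> (indicator S) y \<le> (\<Prod>j\<in>UNIV. measure (wmeas (\<kappa> $ j)) (G j))"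
proof -
  define M where "M = (\<lambda>i. wmeas (\<kappa> $ i))"
  define F where "F = (\<lambda>t. indicator S (\<chi> i. y $ i * t i) :: real)"
  interpret product_sigma_finite M
    using finite_measure_wmeas \<kappa> by (simp add: M_def product_sigma_finite_def finite_measure_def)
  have F: "F \<in> borel_measurable (PiM UNIV M)"
    unfolding F_def M_def using S by (intro measurable_compose[OF borel_measurable_scaled_vec]) auto
  have "AE t in PiM UNIV M. \<forall>i. \<bar>t i\<bar> \<le> 1"
    unfolding M_def using AE_PiM_wmeas_abs_le_1[of "\<lambda>i. \<kappa> $ i"] \<kappa> by simp
  then have "AE t in PiM UNIV M. ennreal (F t) \<le> (\<Prod>j\<in>UNIV. indicator (G j) (t j))"
    by (rule eventually_mono) (auto simp: F_def indicator_def preimage)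
  then have "(\<integral>\<^sup>+ t. ennreal (F t) \<partial>PiM UNIV M) \<le> (\<integral>\<^sup>+ t. (\<Prod>j\<in>UNIV. indicator (G j) (t j)) \<partial>PiM UNIV M)"
    by (rule nn_integral_mono_AE)
  also have "\<dots> = (\<Prod>j\<in>UNIV. \<integral>\<^sup>+ s. indicator (G j) s \<partial>M j)"
    using G by (intro product_nn_integral_prod) (auto simp: M_def intro!: borel_measurable_indicator sets_wmeasI)
  also have "\<dots> = (\<Prod>j\<in>UNIV. emeasure (M j) (G j))"
    using G by (simp add: M_def sets_wmeasI)
  also have "\<dots> = ennreal (\<Prod>j\<in>UNIV. measure (M j) (G j))"
    using \<kappa> by (simp add: M_def finite_measure.emeasure_eq_measure[OF finite_measure_wmeas] prod_ennreal)
  finally have le: "(\<integral>\<^sup>+ t. ennreal (F t) \<partial>PiM UNIV M) \<le> ennreal (\<Prod>j\<in>UNIV. measure (M j) (G j))" .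
  have "V_kappa \<kappa> (indicator S) y = integral\<^sup>L (PiM UNIV M) F"
    by (simp add: V_kappa_def F_def M_def)
  also have "\<dots> = enn2real (\<integral>\<^sup>+ t. ennreal (F t) \<partial>PiM UNIV M)"
    using F by (rule integral_eq_nn_integral) (simp add: F_def)
  also have "\<dots> \<le> (\<Prod>j\<in>UNIV. measure (M j) (G j))"
    using le by (intro enn2real_leI) (auto intro: prod_nonneg)
  finally show ?thesis
    by (simp add: M_def)
qed

lemma mem_Bset_scaled_vecD:
  fixes x y :: "real ^ 'n::finite" and t :: "'n \<Rightarrow> real"
  assumes t: "\<forall>i. \<bar>t i\<bar> \<le> 1" and x: "norm x = 1" and y: "norm y = 1"
    and B: "(\<chi> i. y $ i * t i) \<in> Bset x \<theta>"
  shows "cos \<theta> \<le> inner (absvec x) (absvec y)"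
    and "\<bar>x $ j\<bar> * \<bar>y $ j\<bar> * (1 - \<bar>t j\<bar>) \<le> 1 - cos \<theta>"
proof -
  have "cos \<theta> + \<bar>x $ j\<bar> * \<bar>y $ j\<bar> * (1 - \<bar>t j\<bar>) \<le> inner (absvec x) (absvec y)"
    using B inner_scaled_le_inner_absvec[OF t, of x y j] by (simp add: Bset_def)
  moreover have "inner (absvec x) (absvec y) \<le> 1"
    using norm_cauchy_schwarz[of "absvec x" "absvec y"] x y by simp
  moreover have "0 \<le> \<bar>x $ j\<bar> * \<bar>y $ j\<bar> * (1 - \<bar>t j\<bar>)"
    using t by simp
  ultimately show "cos \<theta> \<le> inner (absvec x) (absvec y)"
    and "\<bar>x $ j\<bar> * \<bar>y $ j\<bar> * (1 - \<bar>t j\<bar>) \<le> 1 - cos \<theta>"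
    by linarith+
qed

lemma V_kappa_indicator_Bset_eq_0:
  fixes \<kappa> x y :: "real ^ 'n::finite"
  assumes \<kappa>: "\<forall>i. \<kappa> $ i \<ge> 0" and x: "norm x = 1" and y: "norm y = 1"
    and far: "inner (absvec x) (absvec y) < cos \<theta>"
  shows "V_kappa \<kappa> (indicator (Bset x \<theta>)) y = 0"
proof -
  have "V_kappa \<kappa> (indicator (Bset x \<theta>)) y \<le> (\<Prod>j\<in>UNIV. measure (wmeas (\<kappa> $ j)) {})"
    using far by (intro V_kappa_indicator_le_prod[OF \<kappa>])
      (auto simp: closed_Bset borel_closed dest!: mem_Bset_scaled_vecD(1)[OF _ x y])
  then show ?thesis
    using V_kappa_indicator_nonneg[of \<kappa> "Bset x \<theta>" y] by (simp add: power_0_left)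
qed

lemma V_kappa_indicator_Bset_le:
  fixes \<kappa> x y :: "real ^ 'n::finite"
  assumes \<kappa>: "\<forall>i. \<kappa> $ i \<ge> 0" and \<theta>: "0 \<le> \<theta>" and x: "norm x = 1" and y: "norm y = 1"
    and near: "cos \<theta> \<le> inner (absvec x) (absvec y)"
  shows "V_kappa \<kappa> (indicator (Bset x \<theta>)) y
    \<le> (\<Prod>j\<in>UNIV. wmeas_const (\<kappa> $ j) * 9 powr (\<kappa> $ j) * ratio_factor \<theta> \<bar>x $ j\<bar> (\<kappa> $ j))"
proof -
  define G where "G j = {s. \<bar>x $ j\<bar> * \<bar>y $ j\<bar> * (1 - \<bar>s\<bar>) \<le> 1 - cos \<theta>}" for j
  have "V_kappa \<kappa> (indicator (Bset x \<theta>)) y \<le> (\<Prod>j\<in>UNIV. measure (wmeas (\<kappa> $ j)) (G j))"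
    using mem_Bset_scaled_vecD(2)[OF _ x y]
    by (intro V_kappa_indicator_le_prod[OF \<kappa>]) (auto simp: G_def closed_Bset borel_closed)
  also have "\<dots> \<le> (\<Prod>j\<in>UNIV. wmeas_const (\<kappa> $ j) * 9 powr (\<kappa> $ j) * ratio_factor \<theta> \<bar>x $ j\<bar> (\<kappa> $ j))"
  proof (intro prod_mono conjI measure_nonneg)
    fix j
    have "\<bar>x $ j\<bar> - \<bar>y $ j\<bar> \<le> norm (absvec x - absvec y)"
      using component_le_norm_cart[of "absvec x - absvec y" j] by (simp add: absvec_def)
    also have "\<dots> \<le> \<theta>"
      by (rule norm_absvec_diff_le[OF x y \<theta> near])
    finally show "measure (wmeas (\<kappa> $ j)) (G j)
        \<le> wmeas_const (\<kappa> $ j) * 9 powr (\<kappa> $ j) * ratio_factor \<theta> \<bar>x $ j\<bar> (\<kappa> $ j)"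
      unfolding G_def using \<kappa> \<theta> by (intro measure_wmeas_layer_le) auto
  qed
  finally show ?thesis .
qed

theorem lemma3p3:
  fixes \<kappa> :: "real ^ 'n::finite"
  assumes "\<forall>i. \<kappa> $ i \<ge> 0"
  shows "\<exists>c. \<forall>\<theta> (x :: real ^ 'n) y. 0 \<le> \<theta> \<and> \<theta> \<le> pi \<and> norm x = 1 \<and> norm y = 1 \<longrightarrow>
     \<bar>V_kappa \<kappa> (indicator (Bset x \<theta>)) y\<bar>
       \<le> c * (\<Prod>j\<in>UNIV. ratio_factor \<theta> \<bar>x $ j\<bar> (\<kappa> $ j)) * indicator (cap (absvec x) \<theta>) (absvec y)"
proof (intro exI allI impI, elim conjE)
  fix \<theta> :: real and x y :: "real ^ 'n"
  assume \<theta>: "0 \<le> \<theta>" and "\<theta> \<le> pi" and x: "norm x = 1" and y: "norm y = 1"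
  let ?c = "\<Prod>j\<in>UNIV. wmeas_const (\<kappa> $ j) * 9 powr (\<kappa> $ j)"
  show "\<bar>V_kappa \<kappa> (indicator (Bset x \<theta>)) y\<bar>
      \<le> ?c * (\<Prod>j\<in>UNIV. ratio_factor \<theta> \<bar>x $ j\<bar> (\<kappa> $ j)) * indicator (cap (absvec x) \<theta>) (absvec y)"
  proof (cases "cos \<theta> \<le> inner (absvec x) (absvec y)")
    case True
    then show ?thesis
      using V_kappa_indicator_Bset_le[OF assms \<theta> x y] V_kappa_indicator_nonneg[of \<kappa> "Bset x \<theta>" y] y
      by (simp add: cap_def prod.distrib)
  next
    case False
    then show ?thesis
      using V_kappa_indicator_Bset_eq_0[OF assms x y] assms
      by (simp add: wmeas_const_nonneg ratio_factor_nonneg prod_nonneg)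
  qed
qed

end
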